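(* Let $\mathcal M$ be a non-empty compact, locally connected Hausdorff space and $\vec\varphi=(\varphi_1,\dots,\varphi_k):\mathcal M\to\mathbb R^k$ a continuous function. Let $(\vec l,\vec b)$ be an admissible pair, i.e. $\vec l=(l_1,\dots,l_k)$ is a Euclidean unit vector with all $l_i>0$ and $\vec b=(b_1,\dots,b_k)$ satisfies $\sum_i b_i=0$. Define $F^{\vec\varphi}_{(\vec l,\vec b)}:\mathcal M\to\mathbb R$ by $F^{\vec\varphi}_{(\vec l,\vec b)}(P)=\max_{i=1,\dots,k}\frac{\varphi_i(P)-b_i}{l_i}$. Then for all $s,t\in\mathbb R$ with $s<t$, setting $\vec x=s\vec l+\vec b$ and $\vec y=t\vec l+\vec b$, we have $$\ell_{(\mathcal M,\vec\varphi)}(\vec x,\vec y)=\ell_{(\mathcal M,F^{\vec\varphi}_{(\vec l,\vec b)})}(s,t).$$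
   Context: For $\vec x,\vec y\in\mathbb R^k$ write $\vec x\preceq\vec y$ if $x_i\le y_i$ for all $i$, and $\vec x\prec\vec y$ if $x_i<y_i$ for all $i$. For a continuous $\vec\varphi:\mathcal M\to\mathbb R^k$ and $\vec t\in\mathbb R^k$, let $\mathcal M\langle\vec\varphi\preceq\vec t\rangle=\{P\in\mathcal M:\varphi_i(P)\le t_i,\ i=1,\dots,k\}$. Two points $P,Q\in\mathcal M$ are $\langle\vec\varphi\preceq\vec y\rangle$-connected if some connected subset of $\mathcal M\langle\vec\varphi\preceq\vec y\rangle$ contains both. The ($k$-dimensional) size function $\ell_{(\mathcal M,\vec\varphi)}:\{(\vec x,\vec y)\in\mathbb R^k\times\mathbb R^k:\vec x\prec\vec y\}\to\mathbb N$ assigns to $(\vec x,\vec y)$ the number of equivalence classes into which $\mathcal M\langle\vec\varphi\preceq\vec x\rangle$ is divided by the $\langle\vec\varphi\preceq\vec y\rangle$-connectedness relation. For $k=1$ this gives the classical size function $\ell_{(\mathcal M,\phi)}(s,t)$, $s<t$, of a continuous $\phi:\mathcal M\to\mathbb R$. *)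

theory Defs
  imports "HOL-Analysis.Analysis"
begin

definition msublevel :: "'a topology \<Rightarrow> ('a \<Rightarrow> real^'k) \<Rightarrow> real^'k \<Rightarrow> 'a set" where
  "msublevel X phi t = {P \<in> topspace X. \<forall>i. phi P $ i \<le> t $ i}"

definition mconnected_rel :: "'a topology \<Rightarrow> ('a \<Rightarrow> real^'k) \<Rightarrow> real^'k \<Rightarrow> 'a \<Rightarrow> 'a \<Rightarrow> bool" where
  "mconnected_rel X phi y P Q =
     (\<exists>C. connectedin X C \<and> C \<subseteq> msublevel X phi y \<and> P \<in> C \<and> Q \<in> C)"

definition msize_function :: "'a topology \<Rightarrow> ('a \<Rightarrow> real^'k) \<Rightarrow> real^'k \<Rightarrow> real^'k \<Rightarrow> nat" where
  "msize_function X phi x y =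
     card (msublevel X phi x //
           {(P, Q). P \<in> msublevel X phi x \<and> Q \<in> msublevel X phi x \<and> mconnected_rel X phi y P Q})"

definition sublevel :: "'a topology \<Rightarrow> ('a \<Rightarrow> real) \<Rightarrow> real \<Rightarrow> 'a set" where
  "sublevel X f t = {P \<in> topspace X. f P \<le> t}"

definition connected_rel :: "'a topology \<Rightarrow> ('a \<Rightarrow> real) \<Rightarrow> real \<Rightarrow> 'a \<Rightarrow> 'a \<Rightarrow> bool" where
  "connected_rel X f t P Q =
     (\<exists>C. connectedin X C \<and> C \<subseteq> sublevel X f t \<and> P \<in> C \<and> Q \<in> C)"

definition size_function :: "'a topology \<Rightarrow> ('a \<Rightarrow> real) \<Rightarrow> real \<Rightarrow> real \<Rightarrow> nat" where
  "size_function X f s t =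
     card (sublevel X f s //
           {(P, Q). P \<in> sublevel X f s \<and> Q \<in> sublevel X f s \<and> connected_rel X f t P Q})"

definition admissible_pair :: "real^'k \<Rightarrow> real^'k \<Rightarrow> bool" where
  "admissible_pair l b = (norm l = 1 \<and> (\<forall>i. l $ i > 0) \<and> (\<Sum>i\<in>UNIV. b $ i) = 0)"

definition F_lb :: "('a \<Rightarrow> real^'k) \<Rightarrow> real^'k \<Rightarrow> real^'k \<Rightarrow> 'a \<Rightarrow> real" where
  "F_lb phi l b P = Max (range (\<lambda>i. (phi P $ i - b $ i) / l $ i))"

end

theory Submission
  imports Defs
begin

lemma F_lb_le_iff:
  fixes phi :: "'a \<Rightarrow> real^'k" and l b :: "real^'k"
  assumes "\<forall>i. l $ i > 0"
  shows "F_lb phi l b P \<le> c \<longleftrightarrow> (\<forall>i. phi P $ i \<le> (c *\<^sub>R l + b) $ i)"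
proof -
  have "F_lb phi l b P \<le> c \<longleftrightarrow> (\<forall>i. (phi P $ i - b $ i) / l $ i \<le> c)"
    unfolding F_lb_def by (subst Max_le_iff) auto
  also have "\<dots> \<longleftrightarrow> (\<forall>i. phi P $ i \<le> (c *\<^sub>R l + b) $ i)"
    using assms by (simp add: divide_le_eq algebra_simps)
  finally show ?thesis .
qed

lemma msublevel_eq_sublevel_F_lb:
  fixes phi :: "'a \<Rightarrow> real^'k" and l b :: "real^'k"
  assumes "\<forall>i. l $ i > 0"
  shows "msublevel X phi (c *\<^sub>R l + b) = sublevel X (F_lb phi l b) c"
  unfolding msublevel_def sublevel_def F_lb_le_iff[OF assms] ..

lemma mconnected_rel_eq_connected_rel_F_lb:
  fixes phi :: "'a \<Rightarrow> real^'k" and l b :: "real^'k"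
  assumes "\<forall>i. l $ i > 0"
  shows "mconnected_rel X phi (c *\<^sub>R l + b) = connected_rel X (F_lb phi l b) c"
  unfolding mconnected_rel_def connected_rel_def msublevel_eq_sublevel_F_lb[OF assms] ..

lemma msize_function_eq_size_function_F_lb:
  fixes phi :: "'a \<Rightarrow> real^'k" and l b :: "real^'k"
  assumes "\<forall>i. l $ i > 0"
  shows "msize_function X phi (s *\<^sub>R l + b) (t *\<^sub>R l + b) = size_function X (F_lb phi l b) s t"
  unfolding msize_function_def size_function_def
    msublevel_eq_sublevel_F_lb[OF assms] mconnected_rel_eq_connected_rel_F_lb[OF assms] ..

theorem theorem2p3:
  fixes X :: "'a topology" and phi :: "'a \<Rightarrow> real^'k"
    and l b :: "real^'k" and s t :: real
  assumes "topspace X \<noteq> {}" and "compact_space X" and "locally_connected_space X"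
    and "Hausdorff_space X"
    and "continuous_map X euclidean phi"
    and "admissible_pair l b"
    and "s < t"
  shows "msize_function X phi (s *\<^sub>R l + b) (t *\<^sub>R l + b) = size_function X (F_lb phi l b) s t"
proof -
  from \<open>admissible_pair l b\<close> have "\<forall>i. l $ i > 0"
    unfolding admissible_pair_def by blast
  then show ?thesis by (rule msize_function_eq_size_function_F_lb)
qed

end
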